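(* Let $E$ be a uniformly convex Banach space. For every $\varepsilon>0$ there is $\delta>0$ such that for all continuous isometric linear representations $\rho:\mathbb{R}\to\mathrm{O}(E)$, all $a\in\mathbb{R}$ and all $\xi\in E$: if $\|\rho(\gamma_a)\xi\|\ge(1-\delta)\|\xi\|$, then $\max_{|t|\le e^a}\|\rho(t)\xi-\xi\|\le\varepsilon\|\xi\|$.
   Context: $\gamma_a$ is the centered Gaussian probability measure on $\mathbb{R}$ with variance $e^{2a}$, and $\rho(\gamma_a)\xi=\int\rho(t)\xi\,d\gamma_a(t)$. $\mathrm{O}(E)$ is the group of linear isometries of $E$. Uniform convexity: for each $\varepsilon\in(0,2]$ there is $\delta>0$ with $\|(\xi+\eta)/2\|\le1-\delta$ for unit vectors with $\|\xi-\eta\|\ge\varepsilon$. *)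

theory Defs
  imports "HOL-Analysis.Analysis" "HOL-Probability.Distributions"
begin

definition uniformly_convex :: "'a::real_normed_vector itself \<Rightarrow> bool" where
  "uniformly_convex _ \<longleftrightarrow>
     (\<forall>\<epsilon>::real. 0 < \<epsilon> \<and> \<epsilon> \<le> 2 \<longrightarrow>
        (\<exists>\<delta>>0. \<forall>x y::'a. norm x = 1 \<and> norm y = 1 \<and> norm (x - y) \<ge> \<epsilon>
                   \<longrightarrow> norm ((x + y) /\<^sub>R 2) \<le> 1 - \<delta>))"

text \<open>A continuous isometric linear representation of the additive group of reals
  into the group O(E) of (bijective) linear isometries of E; continuity is
  continuity of each orbit map t \<mapsto> rho t xi (strong operator topology).\<close>
definition isometric_rep :: "(real \<Rightarrow> 'a::real_normed_vector \<Rightarrow> 'a) \<Rightarrow> bool" where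
  "isometric_rep \<rho> \<longleftrightarrow>
     (\<forall>t. bounded_linear (\<rho> t) \<and> bij (\<rho> t) \<and> (\<forall>x. norm (\<rho> t x) = norm x)) \<and>
     \<rho> 0 = id \<and>
     (\<forall>s t. \<rho> (s + t) = \<rho> s \<circ> \<rho> t) \<and>
     (\<forall>x. continuous_on UNIV (\<lambda>t. \<rho> t x))"

text \<open>rho(gamma_a) xi = integral of rho(t) xi against the centered Gaussian
  measure with variance e^(2a), i.e. standard deviation exp a.\<close>
definition gauss_avg :: "(real \<Rightarrow> 'a::real_normed_vector \<Rightarrow> 'a) \<Rightarrow> real \<Rightarrow> 'a \<Rightarrow> 'a" where
  "gauss_avg \<rho> a \<xi> = integral UNIV (\<lambda>t. normal_density 0 (exp a) t *\<^sub>R \<rho> t \<xi>)"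

end

(*
  Write sigma = e^a and c = e^(-2)/6. On [-2 sigma, 2 sigma] the Gaussian density is at
  least e^(-2)/(3 sigma), so for |s| <= sigma it dominates c/sigma times the sum of the
  indicators of the windows [-sigma, 0] and [s - sigma, s]. The remaining mass 1 - 2c
  contributes at most (1 - 2c)||xi|| to rho(gamma_a) xi, and after shifting the second
  window by s the minorant contributes c times an average of rho(t)(xi + rho(s) xi) over
  [-sigma, 0]. Hence ||rho(gamma_a) xi|| <= (1 - 2c)||xi|| + c||xi + rho(s) xi||.
  If ||rho(s) xi - xi|| > eps ||xi||, uniform convexity gives
  ||xi + rho(s) xi|| <= 2(1 - d)||xi||, so ||rho(gamma_a) xi|| <= (1 - 2cd)||xi||,
  and delta = cd works.
*)
theory Submission
  imports Defs
begin

lemma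
  assumes "isometric_rep \<rho>"
  shows isometric_rep_bounded_linear: "bounded_linear (\<rho> t)"
    and isometric_rep_norm: "norm (\<rho> t x) = norm x"
    and isometric_rep_add: "\<rho> (s + t) x = \<rho> s (\<rho> t x)"
    and isometric_rep_continuous_on: "continuous_on S (\<lambda>t. \<rho> t x)"
  using assms unfolding isometric_rep_def by (auto intro: continuous_on_subset)

lemma isometric_rep_integrable_on:
  fixes \<rho> :: "real \<Rightarrow> 'a::banach \<Rightarrow> 'a"
  assumes "isometric_rep \<rho>"
  shows "(\<lambda>t. \<rho> t x) integrable_on {a..b}"
  by (rule integrable_continuous_real[OF isometric_rep_continuous_on[OF assms]])

lemma isometric_rep_integral_shift:
  assumes "isometric_rep \<rho>"
  shows "integral {a+s..b+s} (\<lambda>t. \<rho> t x) = integral {a..b} (\<lambda>t. \<rho> t (\<rho> s x))"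
proof -
  have "(\<lambda>t. \<rho> t x) \<circ> (+) s = (\<lambda>t. \<rho> t (\<rho> s x))"
    using isometric_rep_add[OF assms] by (simp add: fun_eq_iff add.commute)
  then show ?thesis
    using integral_shift_Icc_real[of a b "\<lambda>t. \<rho> t x" s] by (simp add: add.commute)
qed

lemma isometric_rep_norm_integral_le:
  fixes \<rho> :: "real \<Rightarrow> 'a::banach \<Rightarrow> 'a"
  assumes "isometric_rep \<rho>" "a \<le> b"
  shows "norm (integral {a..b} (\<lambda>t. \<rho> t x)) \<le> (b - a) * norm x"
proof -
  have "norm (integral {a..b} (\<lambda>t. \<rho> t x)) \<le> integral {a..b} (\<lambda>_. norm x)"
    by (rule integral_norm_bound_integral)
      (simp_all add: isometric_rep_integrable_on isometric_rep_norm integrable_const_ivl assms(1))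
  with assms(2) show ?thesis
    by simp
qed

lemma normal_density_ge:
  fixes \<sigma> t :: real
  assumes "0 < \<sigma>" "\<bar>t - \<mu>\<bar> \<le> 2 * \<sigma>"
  shows "exp (-2) / (3 * \<sigma>) \<le> normal_density \<mu> \<sigma> t"
proof -
  have "sqrt (2 * pi) \<le> 3"
    using pi_less_4 by (simp add: real_sqrt_le_iff real_le_lsqrt)
  then have "1 / (3 * \<sigma>) \<le> 1 / sqrt (2 * pi * \<sigma>\<^sup>2)"
    using assms by (simp add: real_sqrt_mult frac_le)
  moreover have "(t - \<mu>)\<^sup>2 \<le> (2 * \<sigma>)\<^sup>2"
    using power_mono[OF assms(2) abs_ge_zero, of 2] by simp
  then have "exp (-2) \<le> exp (- (t - \<mu>)\<^sup>2 / (2 * \<sigma>\<^sup>2))"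
    using assms by (simp add: field_simps power2_eq_square)
  ultimately have "1 / (3 * \<sigma>) * exp (-2) \<le> 1 / sqrt (2 * pi * \<sigma>\<^sup>2) * exp (- (t - \<mu>)\<^sup>2 / (2 * \<sigma>\<^sup>2))"
    by (rule mult_mono) simp_all
  then show ?thesis
    unfolding normal_density_def by simp
qed

lemma normal_density_ge_two_windows:
  fixes \<sigma> s t :: real
  assumes \<sigma>: "0 < \<sigma>" and s: "\<bar>s\<bar> \<le> \<sigma>"
  shows "exp (-2) / 6 / \<sigma> * (indicator {-\<sigma>..0} t + indicator {s-\<sigma>..s} t) \<le> normal_density 0 \<sigma> t"
proof (cases "t \<in> {-\<sigma>..0} \<union> {s-\<sigma>..s}")
  case True
  then have "\<bar>t - 0\<bar> \<le> 2 * \<sigma>"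
    using s by auto
  then have "exp (-2) / (3 * \<sigma>) \<le> normal_density 0 \<sigma> t"
    by (rule normal_density_ge[OF \<sigma>])
  moreover have "exp (-2) / 6 / \<sigma> * (indicator {-\<sigma>..0} t + indicator {s-\<sigma>..s} t) \<le> exp (-2) / (3 * \<sigma>)"
    using \<sigma> by (auto simp: indicator_def field_simps)
  ultimately show ?thesis
    by linarith
qed simp

lemma norm_integral_le_dominated_split:
  fixes p r :: "'n::euclidean_space \<Rightarrow> real" and f :: "'n \<Rightarrow> 'a::banach"
  assumes p: "(p has_integral P) S" and r: "(r has_integral R) S"
    and rf: "((\<lambda>t. r t *\<^sub>R f t) has_integral y) S"
    and pf: "(\<lambda>t. p t *\<^sub>R f t) integrable_on S"
    and r_le_p: "\<And>t. t \<in> S \<Longrightarrow> r t \<le> p t"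
    and f_le: "\<And>t. t \<in> S \<Longrightarrow> norm (f t) \<le> M"
  shows "norm (integral S (\<lambda>t. p t *\<^sub>R f t)) \<le> (P - R) * M + norm y"
proof -
  have diff: "((\<lambda>t. (p t - r t) *\<^sub>R f t) has_integral integral S (\<lambda>t. p t *\<^sub>R f t) - y) S"
    using has_integral_diff[OF integrable_integral[OF pf] rf] by (simp add: scaleR_diff_left)
  have "norm (integral S (\<lambda>t. p t *\<^sub>R f t) - y)
      = norm (integral S (\<lambda>t. (p t - r t) *\<^sub>R f t))"
    using diff by (simp add: integral_unique)
  also have "\<dots> \<le> integral S (\<lambda>t. (p t - r t) * M)"
  proof (rule integral_norm_bound_integral)
    show "(\<lambda>t. (p t - r t) *\<^sub>R f t) integrable_on S"
      using diff by blast
    show "(\<lambda>t. (p t - r t) * M) integrable_on S"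
      using p r by (intro integrable_on_mult_left integrable_diff) auto
    show "norm ((p t - r t) *\<^sub>R f t) \<le> (p t - r t) * M" if "t \<in> S" for t
      using r_le_p[OF that] f_le[OF that] by (simp add: mult_left_mono)
  qed
  also have "\<dots> = (P - R) * M"
    using has_integral_mult_left[OF has_integral_diff[OF p r], of M] by (rule integral_unique)
  finally show ?thesis
    using norm_triangle_sub[of "integral S (\<lambda>t. p t *\<^sub>R f t)" y] by linarith
qed

lemma has_integral_indicator_scaleR_iff:
  fixes f :: "'n::euclidean_space \<Rightarrow> 'a::banach"
  shows "((\<lambda>t. indicator S t *\<^sub>R f t) has_integral I) UNIV \<longleftrightarrow> (f has_integral I) S"
  by (simp add: indicator_scaleR_eq_if has_integral_restrict_UNIV)

lemma has_integral_indicator_Icc: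
  fixes a b :: real
  assumes "a \<le> b"
  shows "(indicator {a..b} has_integral b - a) UNIV"
  using has_integral_indicator_scaleR_iff[of "{a..b}" "\<lambda>_. 1::real"]
    has_integral_const_real[of "1::real" a b] assms
  by simp

lemma isometric_rep_has_integral_two_windows:
  fixes \<rho> :: "real \<Rightarrow> 'a::banach \<Rightarrow> 'a"
  assumes "isometric_rep \<rho>"
  shows "((\<lambda>t. (indicator {-\<sigma>..0} t + indicator {s-\<sigma>..s} t) *\<^sub>R \<rho> t x) has_integral
           integral {-\<sigma>..0} (\<lambda>t. \<rho> t (x + \<rho> s x))) UNIV"
proof -
  have window: "((\<lambda>t. indicator {a..b} t *\<^sub>R \<rho> t x) has_integral integral {a..b} (\<lambda>t. \<rho> t x)) UNIV"
    for a b
    unfolding has_integral_indicator_scaleR_iff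
    by (rule integrable_integral[OF isometric_rep_integrable_on[OF assms]])
  have "((\<lambda>t. (indicator {-\<sigma>..0} t + indicator {s-\<sigma>..s} t) *\<^sub>R \<rho> t x) has_integral
      integral {-\<sigma>..0} (\<lambda>t. \<rho> t x) + integral {s-\<sigma>..s} (\<lambda>t. \<rho> t x)) UNIV"
    using has_integral_add[OF window window] by (simp add: scaleR_add_left)
  also have "integral {s-\<sigma>..s} (\<lambda>t. \<rho> t x) = integral {-\<sigma>..0} (\<lambda>t. \<rho> t (\<rho> s x))"
    using isometric_rep_integral_shift[OF assms, of "-\<sigma>" s 0] by simp
  also have "integral {-\<sigma>..0} (\<lambda>t. \<rho> t x) + \<dots> = integral {-\<sigma>..0} (\<lambda>t. \<rho> t (x + \<rho> s x))"
    by (simp add: integral_add isometric_rep_integrable_on[OF assms] assms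
        linear_add[OF bounded_linear.linear[OF isometric_rep_bounded_linear]])
  finally show ?thesis .
qed

lemma norm_gauss_avg_le:
  fixes \<rho> :: "real \<Rightarrow> 'a::banach \<Rightarrow> 'a"
  assumes rep: "isometric_rep \<rho>" and s: "\<bar>s\<bar> \<le> exp a"
  shows "norm (gauss_avg \<rho> a x) \<le> (1 - exp (-2) / 3) * norm x + exp (-2) / 6 * norm (x + \<rho> s x)"
proof (cases "(\<lambda>t. normal_density 0 (exp a) t *\<^sub>R \<rho> t x) integrable_on UNIV")
  case False
  have "exp (-2) \<le> (1::real)"
    by simp
  then have "exp (-2) \<le> (3::real)"
    by linarith
  then show ?thesis
    unfolding gauss_avg_def not_integrable_integral[OF False] norm_zero
    by (intro add_nonneg_nonneg mult_nonneg_nonneg) auto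
next
  case True
  define \<sigma> where "\<sigma> = exp a"
  define c where "c = exp (-2) / (6::real)"
  define w where "w t = c / \<sigma> * (indicator {-\<sigma>..0} t + indicator {s-\<sigma>..s} t)" for t :: real
  have \<sigma>: "0 < \<sigma>"
    unfolding \<sigma>_def by simp
  have density: "(normal_density 0 \<sigma> has_integral 1) UNIV"
    using has_integral_integral_lborel[OF integrable_normal_density[OF \<sigma>]]
    by (simp add: integral_normal_density[OF \<sigma>])
  have "(w has_integral c / \<sigma> * (\<sigma> + \<sigma>)) UNIV"
    unfolding w_def using \<sigma> has_integral_indicator_Icc[of "-\<sigma>" 0] has_integral_indicator_Icc[of "s-\<sigma>" s]
    by (intro has_integral_mult_right has_integral_add) auto
  then have w: "(w has_integral 2 * c) UNIV"
    using \<sigma> by (simp add: mult.commute)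
  have wx: "((\<lambda>t. w t *\<^sub>R \<rho> t x) has_integral
      (c / \<sigma>) *\<^sub>R integral {-\<sigma>..0} (\<lambda>t. \<rho> t (x + \<rho> s x))) UNIV"
    unfolding w_def using has_integral_cmul[OF isometric_rep_has_integral_two_windows[OF rep], of "c / \<sigma>"]
    by simp
  have w_le: "w t \<le> normal_density 0 \<sigma> t" for t
    unfolding w_def c_def using normal_density_ge_two_windows[OF \<sigma>] s \<sigma>_def by simp
  have "norm (gauss_avg \<rho> a x) \<le> (1 - 2 * c) * norm x +
      norm ((c / \<sigma>) *\<^sub>R integral {-\<sigma>..0} (\<lambda>t. \<rho> t (x + \<rho> s x)))"
    unfolding gauss_avg_def \<sigma>_def[symmetric]
    by (rule norm_integral_le_dominated_split[OF density w wx True[folded \<sigma>_def] w_le])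
      (simp add: isometric_rep_norm[OF rep])
  also have "\<dots> \<le> (1 - 2 * c) * norm x + c * norm (x + \<rho> s x)"
    using isometric_rep_norm_integral_le[OF rep, of "-\<sigma>" 0 "x + \<rho> s x"] \<sigma>
    by (simp add: c_def field_simps)
  finally show ?thesis
    unfolding c_def by simp
qed

lemma uniformly_convex_norm_add_le:
  assumes "uniformly_convex TYPE('a::real_normed_vector)" and "0 < \<epsilon>"
  obtains d where "0 < d"
    and "\<And>x y :: 'a. norm y = norm x \<Longrightarrow> \<epsilon> * norm x \<le> norm (x - y) \<Longrightarrow>
           norm (x + y) \<le> 2 * (1 - d) * norm x"
proof -
  have \<epsilon>': "0 < min \<epsilon> 2 \<and> min \<epsilon> 2 \<le> 2"
    using \<open>0 < \<epsilon>\<close> by simp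
  have "\<exists>d>0. \<forall>u v :: 'a. norm u = 1 \<and> norm v = 1 \<and> min \<epsilon> 2 \<le> norm (u - v)
      \<longrightarrow> norm ((u + v) /\<^sub>R 2) \<le> 1 - d"
    using spec[OF assms(1)[unfolded uniformly_convex_def], of "min \<epsilon> 2"] \<epsilon>' by (rule mp)
  then obtain d where "0 < d" and d: "\<forall>u v :: 'a. norm u = 1 \<and> norm v = 1 \<and>
      min \<epsilon> 2 \<le> norm (u - v) \<longrightarrow> norm ((u + v) /\<^sub>R 2) \<le> 1 - d"
    by blast
  have "norm (x + y) \<le> 2 * (1 - d) * norm x"
    if y: "norm y = norm x" and far: "\<epsilon> * norm x \<le> norm (x - y)" for x y :: 'a
  proof (cases "x = 0")
    case True
    with y show ?thesis
      by simp
  next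
    case False
    define n where "n = norm x"
    define u where "u = x /\<^sub>R n"
    define v where "v = y /\<^sub>R n"
    have n: "0 < n"
      unfolding n_def using False by simp
    have x: "x = n *\<^sub>R u" and y': "y = n *\<^sub>R v"
      unfolding u_def v_def using n by simp_all
    have unit: "norm u = 1" "norm v = 1"
      using n y unfolding u_def v_def n_def by simp_all
    have "\<epsilon> * n \<le> n * norm (u - v)"
      using far n unit unfolding x y' by (simp flip: scaleR_diff_right)
    then have "min \<epsilon> 2 \<le> norm (u - v)"
      using n by (simp add: mult.commute)
    with unit have "norm ((u + v) /\<^sub>R 2) \<le> 1 - d"
      using d by blast
    then have "n * norm (u + v) \<le> n * (2 * (1 - d))"
      using n by simp
    then show ?thesis
      using n unit unfolding x y' by (simp flip: scaleR_add_right)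
  qed
  with \<open>0 < d\<close> show ?thesis
    by (rule that)
qed
lemma norm_gauss_avg_le_if_displaced:
  fixes \<rho> :: "real \<Rightarrow> 'a::banach \<Rightarrow> 'a"
  assumes uniform: "\<And>x y :: 'a. norm y = norm x \<Longrightarrow> \<epsilon> * norm x \<le> norm (x - y) \<Longrightarrow>
      norm (x + y) \<le> 2 * (1 - d) * norm x"
    and rep: "isometric_rep \<rho>" and t: "\<bar>t\<bar> \<le> exp a"
    and far: "\<epsilon> * norm \<xi> \<le> norm (\<rho> t \<xi> - \<xi>)"
  shows "norm (gauss_avg \<rho> a \<xi>) \<le> (1 - exp (-2) / 3 * d) * norm \<xi>"
proof -
  define c where "c = exp (-2) / (6::real)"
  have "norm (\<xi> + \<rho> t \<xi>) \<le> 2 * (1 - d) * norm \<xi>"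
    using far by (intro uniform isometric_rep_norm[OF rep]) (simp add: norm_minus_commute)
  then have "c * norm (\<xi> + \<rho> t \<xi>) \<le> c * (2 * (1 - d) * norm \<xi>)"
    unfolding c_def by simp
  moreover have "norm (gauss_avg \<rho> a \<xi>) \<le> (1 - 2 * c) * norm \<xi> + c * norm (\<xi> + \<rho> t \<xi>)"
    using norm_gauss_avg_le[OF rep t, of \<xi>] by (simp add: c_def)
  ultimately have "norm (gauss_avg \<rho> a \<xi>) \<le> (1 - 2 * c) * norm \<xi> + c * (2 * (1 - d) * norm \<xi>)"
    by linarith
  then show ?thesis
    by (simp add: c_def algebra_simps)
qed

theorem proposition3p3:
  assumes "uniformly_convex TYPE('a::banach)"
  shows "\<forall>\<epsilon>>0. \<exists>\<delta>>0. \<forall>(\<rho>::real \<Rightarrow> 'a \<Rightarrow> 'a) (a::real) (\<xi>::'a).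
           isometric_rep \<rho> \<longrightarrow> norm (gauss_avg \<rho> a \<xi>) \<ge> (1 - \<delta>) * norm \<xi> \<longrightarrow>
           (\<forall>t. \<bar>t\<bar> \<le> exp a \<longrightarrow> norm (\<rho> t \<xi> - \<xi>) \<le> \<epsilon> * norm \<xi>)"
proof (intro allI impI)
  fix \<epsilon> :: real
  assume "0 < \<epsilon>"
  then obtain d where "0 < d" and uniform: "\<And>x y :: 'a. norm y = norm x \<Longrightarrow>
      \<epsilon> * norm x \<le> norm (x - y) \<Longrightarrow> norm (x + y) \<le> 2 * (1 - d) * norm x"
    using uniformly_convex_norm_add_le[OF assms] by blast
  show "\<exists>\<delta>>0. \<forall>(\<rho>::real \<Rightarrow> 'a \<Rightarrow> 'a) a \<xi>.
      isometric_rep \<rho> \<longrightarrow> (1 - \<delta>) * norm \<xi> \<le> norm (gauss_avg \<rho> a \<xi>) \<longrightarrow>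
      (\<forall>t. \<bar>t\<bar> \<le> exp a \<longrightarrow> norm (\<rho> t \<xi> - \<xi>) \<le> \<epsilon> * norm \<xi>)"
  proof (intro exI[of _ "exp (-2) / 6 * d"] conjI allI impI)
    show "0 < exp (-2) / 6 * d"
      using \<open>0 < d\<close> by simp
    fix \<rho> :: "real \<Rightarrow> 'a \<Rightarrow> 'a" and a \<xi> t
    assume rep: "isometric_rep \<rho>" and t: "\<bar>t\<bar> \<le> exp a"
      and avg: "(1 - exp (-2) / 6 * d) * norm \<xi> \<le> norm (gauss_avg \<rho> a \<xi>)"
    show "norm (\<rho> t \<xi> - \<xi>) \<le> \<epsilon> * norm \<xi>"
    proof (rule ccontr)
      assume "\<not> ?thesis"
      then have "\<xi> \<noteq> 0" and far: "\<epsilon> * norm \<xi> \<le> norm (\<rho> t \<xi> - \<xi>)"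
        using isometric_rep_norm[OF rep, of t \<xi>] by auto
      have "norm (gauss_avg \<rho> a \<xi>) \<le> (1 - exp (-2) / 3 * d) * norm \<xi>"
        using uniform rep t far by (rule norm_gauss_avg_le_if_displaced)
      moreover have "0 < exp (-2) / 6 * d * norm \<xi>"
        using \<open>\<xi> \<noteq> 0\<close> \<open>0 < d\<close> by simp
      ultimately show False
        using avg by (simp add: algebra_simps)
    qed
  qed
qed

end
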